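(* Let $N>0$. For every $\tau\in(0,1)$: (i) $0<\beta_1^*(\tau)\le\overline\beta_1(\tau)$, with equality if and only if $\tau=\tau_0^{(2)}$; (ii) $0<\beta_2^*(\tau)\le\overline\beta_2(\tau)$, with equality if and only if $\tau=\tau_0^{(1)}$.
   Context: With $D=(N+1)^2+2\tau(N+1)+1$: $$\overline\beta_1(\tau)=\tfrac{2}{1-\tau^2}(N+1+\tau+\sqrt D),\qquad \overline\beta_2(\tau)=\tfrac{2}{1-\tau^2}(1+\tau(N+1)+\sqrt D);$$ $$\beta_1^*(\tau)=4(N+1)+8\tau,\qquad \beta_2^*(\tau)=4+8\tau(N+1);$$ $$\tau_0^{(1)}=\frac{N+1}{1+\sqrt{1+4(N+1)^2}},\qquad \tau_0^{(2)}=\frac{1}{N+1+\sqrt{(N+1)^2+4}}.$$ *)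

theory Defs
  imports Complex_Main
begin

definition Dq :: "nat \<Rightarrow> real \<Rightarrow> real" where
  "Dq N \<tau> = (real N + 1)^2 + 2 * \<tau> * (real N + 1) + 1"

definition beta1bar :: "nat \<Rightarrow> real \<Rightarrow> real" where
  "beta1bar N \<tau> = 2 / (1 - \<tau>^2) * (real N + 1 + \<tau> + sqrt (Dq N \<tau>))"

definition beta2bar :: "nat \<Rightarrow> real \<Rightarrow> real" where
  "beta2bar N \<tau> = 2 / (1 - \<tau>^2) * (1 + \<tau> * (real N + 1) + sqrt (Dq N \<tau>))"

definition beta1star :: "nat \<Rightarrow> real \<Rightarrow> real" where
  "beta1star N \<tau> = 4 * (real N + 1) + 8 * \<tau>"

definition beta2star :: "nat \<Rightarrow> real \<Rightarrow> real" where
  "beta2star N \<tau> = 4 + 8 * \<tau> * (real N + 1)"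

definition tau0_1 :: "nat \<Rightarrow> real" where
  "tau0_1 N = (real N + 1) / (1 + sqrt (1 + 4 * (real N + 1)^2))"

definition tau0_2 :: "nat \<Rightarrow> real" where
  "tau0_2 N = 1 / (real N + 1 + sqrt ((real N + 1)^2 + 4))"

end

theory Submission
  imports Defs
begin

text \<open>Both parts are one inequality in disguise. With \<open>S = sqrt (u\<^sup>2 + 2tuv + v\<^sup>2)\<close>,
  \<open>\<beta>\<^sup>* = 4u + 8tv\<close> and \<open>\<overline>\<beta> = 2 (u + tv + S) / (1 - t\<^sup>2)\<close>, part (i) is the case
  \<open>(u, v) = (N + 1, 1)\<close> and part (ii) the case \<open>(u, v) = (1, N + 1)\<close>.
  Clearing the denominator, \<open>\<beta>\<^sup>* \<le> \<overline>\<beta>\<close> becomes \<open>A \<le> S\<close> for an explicit cubic \<open>A\<close>,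
  and the polynomial identity \<open>S\<^sup>2 = A\<^sup>2 + q\<^sup>2 (1 - t\<^sup>2)\<close> with \<open>q = 4vt\<^sup>2 + 2ut - v\<close>
  proves this, with equality exactly at the positive root of \<open>q\<close>, which is \<open>\<tau>\<^sub>0\<close>.\<close>

lemma le_sqrt_square_add:
  fixes a d :: real
  assumes "0 \<le> d"
  shows "a \<le> sqrt (a\<^sup>2 + d)"
proof -
  have "a \<le> \<bar>a\<bar>" by simp
  also have "\<dots> = sqrt (a\<^sup>2)" by simp
  also have "\<dots> \<le> sqrt (a\<^sup>2 + d)" using assms by (intro real_sqrt_le_mono) simp
  finally show ?thesis .
qed

lemma eq_sqrt_square_add_iff:
  fixes a d :: real
  assumes "0 \<le> d"
  shows "a = sqrt (a\<^sup>2 + d) \<longleftrightarrow> d = 0 \<and> 0 \<le> a"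
proof
  assume a: "a = sqrt (a\<^sup>2 + d)"
  then have "0 \<le> a" using assms by (metis add_nonneg_nonneg real_sqrt_ge_zero zero_le_power2)
  moreover have "a\<^sup>2 = a\<^sup>2 + d" using a assms
    by (metis add_nonneg_nonneg real_sqrt_pow2 zero_le_power2)
  ultimately show "d = 0 \<and> 0 \<le> a" by simp
qed simp

lemma quadratic_positive_root_iff:
  fixes c m t :: real
  assumes "0 < c" "0 \<le> m" "0 < t"
  shows "4 * c * t\<^sup>2 + 2 * m * t - c = 0 \<longleftrightarrow> t = c / (m + sqrt (m\<^sup>2 + 4 * c\<^sup>2))"
proof -
  define R where "R = sqrt (m\<^sup>2 + 4 * c\<^sup>2)"
  define t0 where "t0 = c / (m + R)"
  have R2: "R\<^sup>2 = m\<^sup>2 + 4 * c\<^sup>2" unfolding R_def by simp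
  have "0 < R" unfolding R_def using assms by (simp add: add_nonneg_pos)
  then have mR: "0 < m + R" using assms by simp
  then have "0 < t0" unfolding t0_def using assms by simp
  have t0_mR: "t0 * (m + R) = c" unfolding t0_def using mR by simp
  have "(4 * c * t0\<^sup>2 + 2 * m * t0 - c) * (m + R)\<^sup>2
      = 4 * c * (t0 * (m + R))\<^sup>2 + 2 * m * (t0 * (m + R)) * (m + R) - c * (m + R)\<^sup>2"
    by (simp add: algebra_simps power2_eq_square)
  also have "\<dots> = c * (4 * c\<^sup>2 + m\<^sup>2 - R\<^sup>2)"
    unfolding t0_mR by (simp add: algebra_simps power2_eq_square)
  also have "\<dots> = 0" using R2 by simp
  finally have root: "4 * c * t0\<^sup>2 + 2 * m * t0 - c = 0" using mR by simp
  have "(4 * c * t\<^sup>2 + 2 * m * t - c) - (4 * c * t0\<^sup>2 + 2 * m * t0 - c)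
      = (t - t0) * (4 * c * (t + t0) + 2 * m)"
    by (simp add: algebra_simps power2_eq_square)
  moreover have "0 < 4 * c * (t + t0) + 2 * m" using assms \<open>0 < t0\<close> by (simp add: add_pos_nonneg)
  ultimately have "4 * c * t\<^sup>2 + 2 * m * t - c = 0 \<longleftrightarrow> t = t0" using root
    by (metis diff_zero eq_iff_diff_eq_0 mult_eq_0_iff order_less_irrefl)
  then show ?thesis unfolding R_def t0_def .
qed

lemma threshold_le_bound:
  fixes u v t :: real
  assumes "0 < u" "0 < v" "0 < t" "t < 1"
  defines "S \<equiv> sqrt (u\<^sup>2 + 2 * t * u * v + v\<^sup>2)"
  shows "4 * u + 8 * t * v \<le> 2 / (1 - t\<^sup>2) * (u + t * v + S)"
    and "4 * u + 8 * t * v = 2 / (1 - t\<^sup>2) * (u + t * v + S)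
           \<longleftrightarrow> t = v / (u + sqrt (u\<^sup>2 + 4 * v\<^sup>2))"
proof -
  define A where "A = u + 3 * t * v - 2 * u * t\<^sup>2 - 4 * v * t ^ 3"
  define q where "q = 4 * v * t\<^sup>2 + 2 * u * t - v"
  have "0 < 1 - t\<^sup>2" using assms by (simp add: power_less_one_iff)
  then have gap_nonneg: "0 \<le> q\<^sup>2 * (1 - t\<^sup>2)" by simp
  have S_eq: "S = sqrt (A\<^sup>2 + q\<^sup>2 * (1 - t\<^sup>2))"
    unfolding S_def A_def q_def by (simp add: algebra_simps power2_eq_square power3_eq_cube)
  have "4 * u + 8 * t * v = 2 / (1 - t\<^sup>2) * (u + t * v + A)"
    using \<open>0 < 1 - t\<^sup>2\<close> unfolding A_def
    by (simp add: field_simps power2_eq_square power3_eq_cube)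
  then have reduce: "4 * u + 8 * t * v \<le> 2 / (1 - t\<^sup>2) * (u + t * v + S) \<longleftrightarrow> A \<le> S"
            "4 * u + 8 * t * v = 2 / (1 - t\<^sup>2) * (u + t * v + S) \<longleftrightarrow> A = S"
    using \<open>0 < 1 - t\<^sup>2\<close> by (simp_all add: divide_le_cancel)
  show "4 * u + 8 * t * v \<le> 2 / (1 - t\<^sup>2) * (u + t * v + S)"
    unfolding reduce unfolding S_eq using gap_nonneg by (rule le_sqrt_square_add)
  have "A = u + 2 * t * v - t * q"
    unfolding A_def q_def by (simp add: algebra_simps power2_eq_square power3_eq_cube)
  then have "q = 0 \<Longrightarrow> 0 \<le> A" using assms by simp
  then have "A = S \<longleftrightarrow> q = 0"
    unfolding S_eq eq_sqrt_square_add_iff[OF gap_nonneg] using \<open>0 < 1 - t\<^sup>2\<close> by auto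
  also have "\<dots> \<longleftrightarrow> t = v / (u + sqrt (u\<^sup>2 + 4 * v\<^sup>2))"
    unfolding q_def using quadratic_positive_root_iff[of v u t] assms by simp
  finally show "4 * u + 8 * t * v = 2 / (1 - t\<^sup>2) * (u + t * v + S)
           \<longleftrightarrow> t = v / (u + sqrt (u\<^sup>2 + 4 * v\<^sup>2))"
    unfolding reduce .
qed

theorem mainTheorem14:
  fixes N :: nat and \<tau> :: real
  assumes "N > 0" and "0 < \<tau>" and "\<tau> < 1"
  shows "(0 < beta1star N \<tau> \<and> beta1star N \<tau> \<le> beta1bar N \<tau>
            \<and> (beta1star N \<tau> = beta1bar N \<tau> \<longleftrightarrow> \<tau> = tau0_2 N))
       \<and> (0 < beta2star N \<tau> \<and> beta2star N \<tau> \<le> beta2bar N \<tau>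
            \<and> (beta2star N \<tau> = beta2bar N \<tau> \<longleftrightarrow> \<tau> = tau0_1 N))"
proof -
  define M where "M = real N + 1"
  have "0 < M" unfolding M_def by simp
  have D1: "Dq N \<tau> = M\<^sup>2 + 2 * \<tau> * M * 1 + 1\<^sup>2" and D2: "Dq N \<tau> = 1\<^sup>2 + 2 * \<tau> * 1 * M + M\<^sup>2"
    unfolding Dq_def M_def by simp_all
  have part1: "beta1star N \<tau> = 4 * M + 8 * \<tau> * 1"
      "beta1bar N \<tau> = 2 / (1 - \<tau>\<^sup>2) * (M + \<tau> * 1 + sqrt (M\<^sup>2 + 2 * \<tau> * M * 1 + 1\<^sup>2))"
      "tau0_2 N = 1 / (M + sqrt (M\<^sup>2 + 4 * 1\<^sup>2))"
    unfolding beta1star_def beta1bar_def tau0_2_def D1 by (simp_all add: M_def)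
  have part2: "beta2star N \<tau> = 4 * 1 + 8 * \<tau> * M"
      "beta2bar N \<tau> = 2 / (1 - \<tau>\<^sup>2) * (1 + \<tau> * M + sqrt (1\<^sup>2 + 2 * \<tau> * 1 * M + M\<^sup>2))"
      "tau0_1 N = M / (1 + sqrt (1\<^sup>2 + 4 * M\<^sup>2))"
    unfolding beta2star_def beta2bar_def tau0_1_def D2 by (simp_all add: M_def)
  show ?thesis
    unfolding part1 part2
    using threshold_le_bound[of M 1 \<tau>] threshold_le_bound[of 1 M \<tau>] \<open>0 < M\<close> assms(2,3)
    by (simp add: add_pos_pos)
qed

end
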